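(* Let $X$ be a tree of bounded valence, $p$ a transition kernel on $X_0$ with $(X_0,p)$ irreducible and $k\ge0$ with $d(x,y)>k\Rightarrow p(x,y)=0$. Let $\gamma$ be a $p$-admissible path with source $a$ and aim $b$, and let $x\neq y$ be vertices with $a\in\mathcal{B}(x)\setminus\mathcal{B}(y)$ and $b\in\mathcal{B}(y)$; write $[x,y]=(x_0,\dots,x_m)$. Then there exist an integer $0<l\le m$, a tuple $(c_0,\dots,c_l)\in\Xi_{[x,y]}$ with crossing indices $(i_1,\dots,i_l)$, and $p$-admissible paths $\gamma_1,\dots,\gamma_l,\gamma_f$ with $\gamma_s\in\mathcal{P}h(c_{s-1},c_s;\mathcal{B}(x_{i_s})^\complement)$ for $1\le s\le l$ and $\gamma_f\in\mathcal{P}h(c_l,b)$, such that $$\gamma=\gamma_1\ast\cdots\ast\gamma_l\ast\gamma_f.$$ The tuple $(c_0,\dots,c_l)$ and this decomposition are unique with these properties.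
   Context: A $p$-admissible path is $(\omega_0,\dots,\omega_n)$, $n\ge0$, with $p(\omega_{i-1},\omega_i)>0$ for all $i$; source $\omega_0$, aim $\omega_n$. $\mathcal{P}h(a,b)$ is the set of those from $a$ to $b$, and $\mathcal{P}h(a,b;\Omega)$ those whose intermediate vertices $\omega_1,\dots,\omega_{n-1}$ lie in $\Omega$. Concatenation $(\omega_0,\dots,\omega_n)\ast(\omega_n,\omega'_1,\dots,\omega'_{m})=(\omega_0,\dots,\omega_n,\omega'_1,\dots,\omega'_m)$. $\mathcal{B}(w)=\{v:d(w,v)\le k\}$, $\partial\mathcal{B}(w)=\{v:d(w,v)=k+1\}$, $\Xi_w=\{(a,b)\in\partial\mathcal{B}(w)\times\mathcal{B}(w):\mathcal{P}h(a,b;\mathcal{B}(w)^\complement)\ne\emptyset\}$. $\Xi_{[x,y]}$ is the set of tuples $(c_0,\dots,c_l)$, $0<l\le m$, for which there are integers $0<i_1<\dots<i_l\le m$ (the crossing indices, uniquely given by $i_s=1+\max\{i:c_{s-1}\in\mathcal{B}(x_i)\}$) with $c_0\in\mathcal{B}(x)\cap\partial\mathcal{B}(x_{i_1})$, $c_j\in\mathcal{B}(x_{i_j})\cap\partial\mathcal{B}(x_{i_{j+1}})$, $c_l\in\mathcal{B}(x_{i_l})\cap\mathcal{B}(y)$, and $(c_{j-1},c_j)\in\Xi_{x_{i_j}}$. *)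

theory Defs
  imports "HOL-Analysis.Analysis"
begin

definition walk :: "('a \<Rightarrow> 'a \<Rightarrow> bool) \<Rightarrow> 'a list \<Rightarrow> bool" where
  "walk adj w \<longleftrightarrow> w \<noteq> [] \<and> (\<forall>i. i + 1 < length w \<longrightarrow> adj (w ! i) (w ! (i + 1)))"

definition is_tree :: "('a \<Rightarrow> 'a \<Rightarrow> bool) \<Rightarrow> bool" where
  "is_tree adj \<longleftrightarrow>
     (\<forall>u v. adj u v \<longrightarrow> adj v u) \<and> (\<forall>u. \<not> adj u u) \<and>
     (\<forall>u v. \<exists>w. walk adj w \<and> hd w = u \<and> last w = v) \<and>
     \<not> (\<exists>w. walk adj w \<and> length w \<ge> 3 \<and> distinct w \<and> adj (last w) (hd w))"

definition bounded_valence :: "('a \<Rightarrow> 'a \<Rightarrow> bool) \<Rightarrow> bool" where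
  "bounded_valence adj \<longleftrightarrow> (\<exists>N::nat. \<forall>v. finite {u. adj v u} \<and> card {u. adj v u} \<le> N)"

definition gdist :: "('a \<Rightarrow> 'a \<Rightarrow> bool) \<Rightarrow> 'a \<Rightarrow> 'a \<Rightarrow> nat" where
  "gdist adj u v = (LEAST n. \<exists>w. walk adj w \<and> hd w = u \<and> last w = v \<and> length w = n + 1)"

definition is_geodesic :: "('a \<Rightarrow> 'a \<Rightarrow> bool) \<Rightarrow> 'a list \<Rightarrow> 'a \<Rightarrow> 'a \<Rightarrow> bool" where
  "is_geodesic adj xs x y \<longleftrightarrow> walk adj xs \<and> hd xs = x \<and> last xs = y \<and> length xs = gdist adj x y + 1"

definition transition_kernel :: "('a \<Rightarrow> 'a \<Rightarrow> real) \<Rightarrow> bool" where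
  "transition_kernel p \<longleftrightarrow> (\<forall>x y. 0 \<le> p x y) \<and> (\<forall>x. (p x has_sum 1) UNIV)"

definition admissible :: "('a \<Rightarrow> 'a \<Rightarrow> real) \<Rightarrow> 'a list \<Rightarrow> bool" where
  "admissible p w \<longleftrightarrow> w \<noteq> [] \<and> (\<forall>i. i + 1 < length w \<longrightarrow> p (w ! i) (w ! (i + 1)) > 0)"

definition Ph :: "('a \<Rightarrow> 'a \<Rightarrow> real) \<Rightarrow> 'a \<Rightarrow> 'a \<Rightarrow> 'a list set" where
  "Ph p a b = {w. admissible p w \<and> hd w = a \<and> last w = b}"

definition Ph_in :: "('a \<Rightarrow> 'a \<Rightarrow> real) \<Rightarrow> 'a \<Rightarrow> 'a \<Rightarrow> 'a set \<Rightarrow> 'a list set" where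
  "Ph_in p a b \<Omega> = {w \<in> Ph p a b. \<forall>i. 0 < i \<and> i + 1 < length w \<longrightarrow> w ! i \<in> \<Omega>}"

definition irreducible_kernel :: "('a \<Rightarrow> 'a \<Rightarrow> real) \<Rightarrow> bool" where
  "irreducible_kernel p \<longleftrightarrow> (\<forall>x y. Ph p x y \<noteq> {})"

text \<open>Concatenation: (\<omega>_0..\<omega>_n) * (\<omega>_n,\<omega>'_1..\<omega>'_m) = (\<omega>_0..\<omega>_n,\<omega>'_1..\<omega>'_m);
  cat_paths [g1,...,gr] = g1 * ... * gr.\<close>
fun cat_paths :: "'a list list \<Rightarrow> 'a list" where
  "cat_paths [] = []"
| "cat_paths [g] = g"
| "cat_paths (g # gs) = g @ tl (cat_paths gs)"

definition Ball_k :: "('a \<Rightarrow> 'a \<Rightarrow> bool) \<Rightarrow> nat \<Rightarrow> 'a \<Rightarrow> 'a set" where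
  "Ball_k adj k w = {v. gdist adj w v \<le> k}"

definition bdry_k :: "('a \<Rightarrow> 'a \<Rightarrow> bool) \<Rightarrow> nat \<Rightarrow> 'a \<Rightarrow> 'a set" where
  "bdry_k adj k w = {v. gdist adj w v = k + 1}"

definition Xi :: "('a \<Rightarrow> 'a \<Rightarrow> bool) \<Rightarrow> nat \<Rightarrow> ('a \<Rightarrow> 'a \<Rightarrow> real) \<Rightarrow> 'a \<Rightarrow> ('a \<times> 'a) set" where
  "Xi adj k p w = {(a, b). a \<in> bdry_k adj k w \<and> b \<in> Ball_k adj k w \<and>
                           Ph_in p a b (- Ball_k adj k w) \<noteq> {}}"

text \<open>c = (c_0,...,c_l) (a list of length l+1) lies in \<Xi>_[x,y] with crossing indices
  i_1 < ... < i_l (the values ii 1, ..., ii l), where xs = [x,y] = (x_0,...,x_m).\<close>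
definition Xi_geod_with :: "('a \<Rightarrow> 'a \<Rightarrow> bool) \<Rightarrow> nat \<Rightarrow> ('a \<Rightarrow> 'a \<Rightarrow> real) \<Rightarrow> 'a list
    \<Rightarrow> 'a list \<Rightarrow> (nat \<Rightarrow> nat) \<Rightarrow> bool" where
  "Xi_geod_with adj k p xs c ii \<longleftrightarrow>
     (let l = length c - 1; m = length xs - 1; B = Ball_k adj k; dB = bdry_k adj k in
       c \<noteq> [] \<and> 0 < l \<and> l \<le> m \<and>
       0 < ii 1 \<and> (\<forall>s. 1 \<le> s \<and> s < l \<longrightarrow> ii s < ii (s + 1)) \<and> ii l \<le> m \<and>
       c ! 0 \<in> B (xs ! 0) \<inter> dB (xs ! ii 1) \<and>
       (\<forall>j. 1 \<le> j \<and> j < l \<longrightarrow> c ! j \<in> B (xs ! ii j) \<inter> dB (xs ! ii (j + 1))) \<and>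
       c ! l \<in> B (xs ! ii l) \<inter> B (xs ! m) \<and>
       (\<forall>j. 1 \<le> j \<and> j \<le> l \<longrightarrow> (c ! (j - 1), c ! j) \<in> Xi adj k p (xs ! ii j)))"

end

theory Submission
  imports Defs
begin

text \<open>
  Removing a vertex v splits a tree into branches, one for each neighbour q of v, and a jump of
  length at most k between two vertices at distance more than k from v stays in one branch.
  Along the geodesic [x,y], the distance from a fixed vertex c first decreases and then increases,
  so once c has left the balls around the x_i it never re-enters them: there is a unique first
  index i_1 with d(c, x_{i_1}) = k + 1, and c lies in the branch at x_{i_1} towards x_{i_1 - 1}.
  A p-admissible path from c to b in B(y) cannot stay in that branch, since b lies in the branch
  towards x_{i_1 + 1}; hence it enters B(x_{i_1}). Cutting it at its first entrance and recursing
  on the rest gives the decomposition, and the same induction gives uniqueness, because i_1 is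
  determined by c and the first piece by the first entrance time.
\<close>

section \<open>Walks and admissible paths\<close>

lemma walk_Cons_Cons: "walk adj (u # v # w) \<longleftrightarrow> adj u v \<and> walk adj (v # w)"
proof
  assume h: "walk adj (u # v # w)"
  have "adj u v" using h[unfolded walk_def, THEN conjunct2, rule_format, of 0] by simp
  moreover have "walk adj (v # w)"
    unfolding walk_def using h[unfolded walk_def, THEN conjunct2, rule_format, of "Suc _"] by auto
  ultimately show "adj u v \<and> walk adj (v # w)" ..
next
  assume h: "adj u v \<and> walk adj (v # w)"
  show "walk adj (u # v # w)"
    unfolding walk_def
  proof (intro conjI allI impI)
    fix i assume "i + 1 < length (u # v # w)"
    then show "adj ((u # v # w) ! i) ((u # v # w) ! (i + 1))"
      using h unfolding walk_def by (cases i) auto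
  qed simp
qed

lemma walk_singleton [simp]: "walk adj [u]"
  by (simp add: walk_def)

lemma walk_not_Nil: "walk adj w \<Longrightarrow> w \<noteq> []"
  by (simp add: walk_def)

lemma walk_append:
  "walk adj xs \<Longrightarrow> walk adj ys \<Longrightarrow> adj (last xs) (hd ys) \<Longrightarrow> walk adj (xs @ ys)"
proof (induction xs rule: induct_list012)
  case (2 u)
  then show ?case by (cases ys) (auto simp: walk_Cons_Cons dest: walk_not_Nil)
next
  case (3 u v xs)
  then show ?case by (simp add: walk_Cons_Cons)
qed (simp add: walk_def)

lemma walk_append_tl:
  assumes "walk adj xs" "walk adj ys" "last xs = hd ys"
  shows "walk adj (xs @ tl ys)"
proof (cases ys rule: remdups_adj.cases)
  case (3 u v zs)
  then show ?thesis using assms walk_append[OF assms(1), of "v # zs"] by (simp add: walk_Cons_Cons)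
qed (use assms in auto)

lemma walk_rev:
  assumes "\<And>u v. adj u v \<Longrightarrow> adj v u"
  shows "walk adj w \<Longrightarrow> walk adj (rev w)"
proof (induction w rule: induct_list012)
  case (3 u v w)
  then show ?case
    using walk_append[of adj "rev (v # w)" "[u]"] assms by (simp add: walk_Cons_Cons)
qed auto

lemma walk_take: "walk adj w \<Longrightarrow> 0 < n \<Longrightarrow> walk adj (take n w)"
  by (auto simp: walk_def)

lemma walk_drop: "walk adj w \<Longrightarrow> n < length w \<Longrightarrow> walk adj (drop n w)"
  by (auto simp: walk_def add.commute add.left_commute)

lemma admissible_not_Nil: "admissible p w \<Longrightarrow> w \<noteq> []"
  by (simp add: admissible_def)

lemma admissible_take: "admissible p w \<Longrightarrow> 0 < n \<Longrightarrow> admissible p (take n w)"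
  by (auto simp: admissible_def)

lemma admissible_drop: "admissible p w \<Longrightarrow> n < length w \<Longrightarrow> admissible p (drop n w)"
  by (auto simp: admissible_def add.commute add.left_commute)

lemma admissible_first_entrance:
  assumes g: "admissible p g" and out: "hd g \<notin> S" and u: "u \<in> set g" "u \<in> S"
  obtains t where "0 < t" "t < length g" "g ! t \<in> S"
    "take (Suc t) g \<in> Ph_in p (hd g) (g ! t) (- S)"
proof -
  have ex: "\<exists>t. t < length g \<and> g ! t \<in> S"
    using u by (metis in_set_conv_nth)
  define t where "t = (LEAST t. t < length g \<and> g ! t \<in> S)"
  have t: "t < length g" "g ! t \<in> S"
    using LeastI_ex[OF ex] unfolding t_def by blast+
  have before: "g ! i \<notin> S" if "i < t" for i
    using not_less_Least[of i "\<lambda>t. t < length g \<and> g ! t \<in> S"] that t(1) unfolding t_def by auto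
  have "t \<noteq> 0"
  proof
    assume "t = 0"
    then show False
      using t(2) out admissible_not_Nil[OF g] by (simp add: hd_conv_nth)
  qed
  moreover have "take (Suc t) g \<in> Ph_in p (hd g) (g ! t) (- S)"
  proof -
    have "admissible p (take (Suc t) g)"
      using admissible_take[OF g] by simp
    moreover have "hd (take (Suc t) g) = hd g"
      using admissible_not_Nil[OF g] by (cases g) auto
    moreover have "last (take (Suc t) g) = g ! t"
      using t(1) by (simp add: take_Suc_conv_app_nth)
    moreover have "\<forall>i. 0 < i \<and> i + 1 < length (take (Suc t) g) \<longrightarrow> take (Suc t) g ! i \<in> - S"
      using before by auto
    ultimately show ?thesis
      by (simp add: Ph_in_def Ph_def)
  qed
  ultimately show ?thesis
    using that t by blast
qed

lemma Ph_in_not_proper_prefix: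
  assumes w: "w \<in> Ph_in p u e (- S)" and w': "w' \<in> Ph_in p u e' (- S)"
    and "u \<notin> S" "e \<in> S" and eq: "w @ r = w' @ r'"
  shows "\<not> length w < length w'"
proof
  assume lt: "length w < length w'"
  let ?i = "length w - 1"
  have "w \<noteq> []" "hd w = u" "last w = e"
    using w by (auto simp: Ph_in_def Ph_def admissible_def)
  then have "w ! ?i = e"
    by (simp add: last_conv_nth)
  moreover have "0 < ?i"
  proof (rule ccontr)
    assume "\<not> 0 < ?i"
    then have "hd w = last w"
      using \<open>w \<noteq> []\<close> by (simp add: hd_conv_nth last_conv_nth)
    then show False
      using \<open>hd w = u\<close> \<open>last w = e\<close> assms(3,4) by simp
  qed
  moreover have "?i < length w" "?i < length w'"
    using lt \<open>w \<noteq> []\<close> by auto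
  then have "w' ! ?i = w ! ?i"
    using arg_cong[OF eq, of "\<lambda>v. v ! ?i"] by (simp add: nth_append)
  moreover have "w' ! ?i \<notin> S"
    using w' lt \<open>0 < ?i\<close> by (auto simp: Ph_in_def)
  ultimately show False
    using assms(4) by simp
qed

lemma Ph_in_first_entrance_unique:
  assumes "w \<in> Ph_in p u e (- S)" "w' \<in> Ph_in p u e' (- S)" "u \<notin> S" "e \<in> S" "e' \<in> S"
    and "w @ r = w' @ r'"
  shows "w = w'"
proof -
  have "length w = length w'"
    using Ph_in_not_proper_prefix[OF assms(1-4,6)]
      Ph_in_not_proper_prefix[OF assms(2,1,3,5) assms(6)[symmetric]] by linarith
  then show ?thesis
    using append_eq_append_conv[of w w' r r'] assms(6) by simp
qed

lemma cat_paths_Cons: "gs \<noteq> [] \<Longrightarrow> cat_paths (g # gs) = g @ tl (cat_paths gs)"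
  by (cases gs) auto

section \<open>Distances in a tree\<close>

locale tree_graph =
  fixes adj :: "'a \<Rightarrow> 'a \<Rightarrow> bool"
  assumes tree: "is_tree adj"
begin

abbreviation d :: "'a \<Rightarrow> 'a \<Rightarrow> nat" where
  "d \<equiv> gdist adj"

lemma adj_sym: "adj u v \<Longrightarrow> adj v u"
  using tree by (simp add: is_tree_def)

lemma adj_irrefl: "\<not> adj u u"
  using tree by (simp add: is_tree_def)

lemma no_cycle: "walk adj w \<Longrightarrow> 3 \<le> length w \<Longrightarrow> distinct w \<Longrightarrow> \<not> adj (last w) (hd w)"
  using tree unfolding is_tree_def by blast

lemma gdist_le_walk:
  assumes "walk adj w" "hd w = u" "last w = v"
  shows "d u v + 1 \<le> length w"
proof -
  have "length w = (length w - 1) + 1"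
    using walk_not_Nil[OF assms(1)] by simp
  then have "d u v \<le> length w - 1"
    unfolding gdist_def using assms by (intro Least_le) blast
  then show ?thesis
    using walk_not_Nil[OF assms(1)] by (cases w) auto
qed

lemma geodesic_exists: "\<exists>w. is_geodesic adj w u v"
proof -
  obtain w where w: "walk adj w" "hd w = u" "last w = v"
    using tree unfolding is_tree_def by blast
  then have "length w = (length w - 1) + 1"
    using walk_not_Nil by fastforce
  then have "\<exists>n w. walk adj w \<and> hd w = u \<and> last w = v \<and> length w = n + 1"
    using w by blast
  then show ?thesis
    unfolding is_geodesic_def gdist_def by (rule LeastI_ex)
qed

lemma gdist_eq_0D:
  assumes "d u v = 0" shows "u = v"
proof -
  obtain w where w: "is_geodesic adj w u v"
    using geodesic_exists by blast
  then have "length w = 1"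
    using assms by (simp add: is_geodesic_def)
  then show ?thesis
    using w by (cases w) (auto simp: is_geodesic_def)
qed

lemma gdist_sym: "d u v = d v u"
proof -
  have "d u v \<le> d v u" for u v
  proof -
    obtain w where w: "walk adj w" "hd w = v" "last w = u" "length w = d v u + 1"
      using geodesic_exists unfolding is_geodesic_def by blast
    have "walk adj (rev w)" "hd (rev w) = u" "last (rev w) = v"
      using walk_rev[of adj, OF adj_sym w(1)] w walk_not_Nil[OF w(1)] by (auto simp: hd_rev last_rev)
    from gdist_le_walk[OF this] show ?thesis
      using w(4) by simp
  qed
  then show ?thesis
    using le_antisym by blast
qed

lemma gdist_triangle: "d u w \<le> d u v + d v w"
proof -
  obtain w1 where w1: "walk adj w1" "hd w1 = u" "last w1 = v" "length w1 = d u v + 1"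
    using geodesic_exists unfolding is_geodesic_def by blast
  obtain w2 where w2: "walk adj w2" "hd w2 = v" "last w2 = w" "length w2 = d v w + 1"
    using geodesic_exists unfolding is_geodesic_def by blast
  have "walk adj (w1 @ tl w2)"
    using walk_append_tl[OF w1(1) w2(1)] w1(3) w2(2) by simp
  moreover have "hd (w1 @ tl w2) = u"
    using w1 walk_not_Nil[OF w1(1)] by simp
  moreover have "last (w1 @ tl w2) = w"
    using w1(3) w2(2,3) walk_not_Nil[OF w2(1)] by (cases w2) auto
  ultimately have "d u w + 1 \<le> length (w1 @ tl w2)"
    by (rule gdist_le_walk)
  then show ?thesis
    using w1(4) w2(4) by simp
qed

lemma gdist_adj:
  assumes "adj u v" shows "d u v = 1"
proof -
  have "d u v + 1 \<le> length [u, v]"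
    using assms by (intro gdist_le_walk) (auto simp: walk_Cons_Cons)
  moreover have "d u v \<noteq> 0"
    using assms gdist_eq_0D adj_irrefl by blast
  ultimately show ?thesis by simp
qed

lemma geodesic_nth_gdist:
  assumes w: "is_geodesic adj w u v" and t: "t < length w"
  shows "d u (w ! t) = t"
proof -
  have w': "walk adj w" "hd w = u" "last w = v" "length w = d u v + 1"
    using w by (auto simp: is_geodesic_def)
  have "walk adj (take (t + 1) w)"
    using walk_take[OF w'(1)] by simp
  moreover have "hd (take (t + 1) w) = u"
    using w'(2) walk_not_Nil[OF w'(1)] by (cases w) auto
  moreover have "last (take (t + 1) w) = w ! t"
    using t by (simp add: take_Suc_conv_app_nth)
  ultimately have "d u (w ! t) + 1 \<le> length (take (t + 1) w)"
    by (rule gdist_le_walk)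
  then have "d u (w ! t) \<le> t"
    using t by simp
  moreover have "walk adj (drop t w)" "hd (drop t w) = w ! t" "last (drop t w) = v"
    using walk_drop[OF w'(1) t] w'(3) t by (auto simp: hd_drop_conv_nth)
  from gdist_le_walk[OF this] have "d (w ! t) v + t \<le> d u v"
    using w'(4) t by simp
  ultimately show ?thesis
    using gdist_triangle[of u v "w ! t"] by linarith
qed

lemma geodesic_snoc:
  assumes "is_geodesic adj w c u" "adj u v" "d c v = d c u + 1"
  shows "is_geodesic adj (w @ [v]) c v"
proof -
  have "walk adj w" "w \<noteq> []"
    using assms(1) walk_not_Nil by (auto simp: is_geodesic_def)
  then show ?thesis
    using assms walk_append[of adj w "[v]"] by (auto simp: is_geodesic_def)
qed

lemma walk_return_index_lt_2:
  assumes walk: "walk adj (u # w)" and dist: "distinct w" and j: "j < length w" "w ! j = u"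
  shows "j < 2"
proof (rule ccontr)
  assume "\<not> j < 2"
  let ?c = "u # take j w"
  have "walk adj ?c"
    using walk_take[OF walk, of "Suc j"] by simp
  moreover have "u \<in> set (drop j w)"
    using j by (metis Cons_nth_drop_Suc list.set_intros(1))
  then have "distinct ?c"
    using dist set_take_disj_set_drop_if_distinct[OF dist, of j j] by auto
  moreover have "adj ((u # w) ! j) ((u # w) ! (j + 1))"
    using walk j(1) unfolding walk_def by simp
  then have "adj (last ?c) (hd ?c)"
    using j \<open>\<not> j < 2\<close> by (cases j) (auto simp: last_conv_nth min_def)
  moreover have "3 \<le> length ?c"
    using j \<open>\<not> j < 2\<close> by simp
  ultimately show False
    using no_cycle by blast
qed

lemma walk_distinct_if_no_backtracking:
  "walk adj w \<Longrightarrow> \<forall>i. i + 2 < length w \<longrightarrow> w ! i \<noteq> w ! (i + 2) \<Longrightarrow> distinct w"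
proof (induction w rule: induct_list012)
  case (3 u v w)
  have "walk adj (v # w)" "adj u v"
    using "3.prems"(1) by (auto simp: walk_Cons_Cons)
  moreover have "\<forall>i. i + 2 < length (v # w) \<longrightarrow> (v # w) ! i \<noteq> (v # w) ! (i + 2)"
    using "3.prems"(2) by (metis Suc_eq_plus1 add_Suc length_Cons nth_Cons_Suc not_less_eq)
  ultimately have dist: "distinct (v # w)"
    using "3.IH"(2) by blast
  have "u \<notin> set (v # w)"
  proof
    assume "u \<in> set (v # w)"
    then obtain j where j: "j < length (v # w)" "(v # w) ! j = u"
      by (metis in_set_conv_nth)
    then have "j < 2"
      using walk_return_index_lt_2 "3.prems"(1) dist by blast
    then show False
      using j \<open>adj u v\<close> adj_irrefl "3.prems"(2)[rule_format, of 0] by (cases j) auto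
  qed
  then show ?case
    using dist by simp
qed auto

lemma closed_walk_backtracks:
  assumes "walk adj w" "2 \<le> length w" "hd w = last w"
  shows "\<exists>i. i + 2 < length w \<and> w ! i = w ! (i + 2)"
proof (rule ccontr)
  assume "\<not> ?thesis"
  then have "distinct w"
    using walk_distinct_if_no_backtracking[OF assms(1)] by blast
  moreover obtain u w' where "w = u # w'"
    using assms(2) by (cases w) auto
  moreover from this have "w' \<noteq> []"
    using assms(2) by auto
  ultimately show False
    using assms(3) by auto
qed

text \<open>The closed walk A @ rev B must backtrack somewhere; distances from c show that this can only
  happen in its middle.\<close>
lemma joined_geodesics_meet:
  assumes A: "is_geodesic adj A c u" and B: "is_geodesic adj B c u'"
    and W: "walk adj (A @ rev B)"
  shows "\<exists>i. 2 * i + 3 = length A + length B \<and> A ! i = B ! i"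
proof -
  let ?a = "length A" and ?b = "length B" and ?W = "A @ rev B"
  have ne: "A \<noteq> []" "B \<noteq> []"
    using A B walk_not_Nil by (auto simp: is_geodesic_def)
  have nth_W: "?W ! t = (if t < ?a then A ! t else B ! (?a + ?b - 1 - t))" if "t < ?a + ?b" for t
    using that by (simp add: nth_append rev_nth add.commute)
  have level: "d c (?W ! t) = (if t < ?a then t else ?a + ?b - 1 - t)" if "t < ?a + ?b" for t
    using that nth_W geodesic_nth_gdist[OF A] geodesic_nth_gdist[OF B] by auto
  have "2 \<le> length ?W"
    using ne by (cases A; cases B) auto
  moreover have "hd ?W = last ?W"
    using A B ne by (simp add: is_geodesic_def hd_rev last_rev)
  ultimately obtain i where i: "i + 2 < ?a + ?b" "?W ! i = ?W ! (i + 2)"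
    using closed_walk_backtracks[OF W] by auto
  then have "(if i < ?a then i else ?a + ?b - 1 - i)
      = (if i + 2 < ?a then i + 2 else ?a + ?b - 1 - (i + 2))"
    using level[of i] level[of "i + 2"] by simp
  then have "i < ?a" "?a \<le> i + 2" "2 * i + 3 = ?a + ?b"
    using i(1) by (auto split: if_splits)
  moreover have "?a + ?b - 1 - (i + 2) = i"
    using \<open>2 * i + 3 = ?a + ?b\<close> by simp
  ultimately show ?thesis
    using i nth_W[of i] nth_W[of "i + 2"] by auto
qed

lemma adj_gdist_cases:
  assumes "adj u v"
  shows "d c v = d c u + 1 \<or> d c u = d c v + 1"
proof -
  have "d c v \<le> d c u + 1" "d c u \<le> d c v + 1"
    using gdist_triangle[of c v u] gdist_triangle[of c u v] gdist_adj assms adj_sym by fastforce+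
  moreover have "d c u \<noteq> d c v"
  proof
    assume eq: "d c u = d c v"
    obtain A B where A: "is_geodesic adj A c u" and B: "is_geodesic adj B c v"
      using geodesic_exists by blast
    have "walk adj (A @ rev B)"
      using A B assms walk_append[of adj A "rev B"] walk_rev[of adj, OF adj_sym] walk_not_Nil
      by (auto simp: is_geodesic_def hd_rev)
    then obtain i where "2 * i + 3 = length A + length B"
      using joined_geodesics_meet[OF A B] by blast
    then show False
      using A B eq by (simp add: is_geodesic_def) presburger
  qed
  ultimately show ?thesis by linarith
qed

text \<open>For a neighbour q of v, branch v q is the component of the tree minus v containing q.\<close>
definition branch :: "'a \<Rightarrow> 'a \<Rightarrow> 'a set" where
  "branch v q = {u. d u q + 1 = d u v}"

lemma branch_unique:
  assumes "adj v q" "adj v q'" "c \<in> branch v q" "c \<in> branch v q'"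
  shows "q = q'"
proof -
  define n where "n = d c q"
  have n': "d c q' = n" "d c v = n + 1"
    using assms(3,4) by (simp_all add: branch_def n_def)
  obtain A B where A: "is_geodesic adj A c q" and B: "is_geodesic adj B c q'"
    using geodesic_exists by blast
  have Av: "is_geodesic adj (A @ [v]) c v"
    using geodesic_snoc[OF A adj_sym[OF assms(1)]] n' n_def by simp
  have "walk adj ((A @ [v]) @ rev B)"
    using Av B assms(2) walk_append[of adj "A @ [v]" "rev B"] walk_rev[of adj, OF adj_sym] walk_not_Nil
    by (auto simp: is_geodesic_def hd_rev)
  then obtain i where i: "2 * i + 3 = length (A @ [v]) + length B" "(A @ [v]) ! i = B ! i"
    using joined_geodesics_meet[OF Av B] by blast
  have "length A = n + 1" "length B = n + 1"
    using A B n' n_def by (simp_all add: is_geodesic_def)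
  moreover have "A \<noteq> []" "B \<noteq> []"
    using A B walk_not_Nil by (auto simp: is_geodesic_def)
  ultimately have "A ! n = last A" "B ! n = last B"
    by (simp_all add: last_conv_nth)
  moreover have "i = n"
    using i(1) \<open>length A = n + 1\<close> \<open>length B = n + 1\<close> by simp
  ultimately have "(A @ [v]) ! i = q" "B ! i = q'"
    using A B \<open>length A = n + 1\<close> by (simp_all add: is_geodesic_def nth_append)
  then show ?thesis
    using i(2) by simp
qed

lemma branch_exists:
  assumes "c \<noteq> v"
  shows "\<exists>q. adj v q \<and> c \<in> branch v q"
proof -
  obtain w where w: "is_geodesic adj w c v"
    using geodesic_exists by blast
  have "d c v \<noteq> 0"
    using assms gdist_eq_0D by blast
  then have len: "length w = d c v + 1" "2 \<le> length w"
    using w by (auto simp: is_geodesic_def)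
  let ?q = "w ! (length w - 2)"
  have step: "\<And>i. i + 1 < length w \<Longrightarrow> adj (w ! i) (w ! (i + 1))"
    using w by (simp add: is_geodesic_def walk_def)
  have "adj ?q (w ! (length w - 2 + 1))"
    by (rule step) (use len in linarith)
  moreover have "w ! (length w - 2 + 1) = v"
  proof -
    have "w \<noteq> []" "last w = v"
      using w walk_not_Nil by (auto simp: is_geodesic_def)
    then have "w ! (length w - 1) = v"
      by (simp add: last_conv_nth)
    moreover have "length w - 2 + 1 = length w - 1"
      using len by linarith
    ultimately show ?thesis
      by simp
  qed
  moreover have "d c ?q = length w - 2"
    using geodesic_nth_gdist[OF w] len(2) by simp
  ultimately have "adj v ?q" "d c ?q + 1 = d c v"
    using len adj_sym by auto
  then show ?thesis
    unfolding branch_def by blast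
qed

lemma mem_Ball_k: "v \<in> Ball_k adj k w \<longleftrightarrow> d v w \<le> k"
  by (simp add: Ball_k_def gdist_sym)

lemma mem_bdry_k: "v \<in> bdry_k adj k w \<longleftrightarrow> d v w = k + 1"
  by (simp add: bdry_k_def gdist_sym)

lemma branch_adj_closed:
  assumes zz: "adj z z'" and "z' \<noteq> v" and q: "adj v q" and z: "z \<in> branch v q"
  shows "z' \<in> branch v q"
proof -
  have z1: "d z z' = 1" "d z' z = 1"
    using gdist_adj zz adj_sym by auto
  consider (away) "d v z' = d v z + 1" | (toward) "d v z = d v z' + 1"
    using adj_gdist_cases[OF zz, of v] by blast
  then show ?thesis
  proof cases
    case away
    have "d z' q \<le> d z' z + d z q"
      by (rule gdist_triangle)
    then have "d z' q < d z' v"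
      using away z1 z gdist_sym[of z' v] gdist_sym[of z v] by (simp add: branch_def)
    then show ?thesis
      using adj_gdist_cases[OF q, of z'] by (auto simp: branch_def)
  next
    case toward
    obtain q' where q': "adj v q'" "z' \<in> branch v q'"
      using branch_exists \<open>z' \<noteq> v\<close> by blast
    have "d z q' \<le> d z z' + d z' q'"
      by (rule gdist_triangle)
    then have "d z q' < d z v"
      using toward z1 q'(2) gdist_sym[of z' v] gdist_sym[of z v] by (simp add: branch_def)
    then have "z \<in> branch v q'"
      using adj_gdist_cases[OF q'(1), of z] by (auto simp: branch_def)
    then show ?thesis
      using branch_unique[OF q q'(1) z] q'(2) by simp
  qed
qed

lemma walk_stays_in_branch:
  "walk adj w \<Longrightarrow> v \<notin> set w \<Longrightarrow> adj v q \<Longrightarrow> hd w \<in> branch v q \<Longrightarrow> last w \<in> branch v q"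
proof (induction w rule: induct_list012)
  case (3 u u' w)
  then have "u' \<in> branch v q"
    using branch_adj_closed[of u u' v q] by (auto simp: walk_Cons_Cons)
  then show ?case
    using 3 by (simp add: walk_Cons_Cons)
qed (simp_all add: walk_def)

lemma branch_short_jump:
  assumes "d u u' \<le> k" "k < d u v" "adj v q" "u \<in> branch v q"
  shows "u' \<in> branch v q"
proof -
  obtain w where w: "is_geodesic adj w u u'"
    using geodesic_exists by blast
  have "v \<notin> set w"
  proof
    assume "v \<in> set w"
    then obtain t where "t < length w" "w ! t = v"
      by (metis in_set_conv_nth)
    then have "d u v < length w"
      using geodesic_nth_gdist[OF w] by auto
    then show False
      using w assms(1,2) by (simp add: is_geodesic_def)
  qed
  then show ?thesis
    using walk_stays_in_branch w assms(3,4) by (auto simp: is_geodesic_def)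
qed

lemma admissible_stays_in_branch:
  assumes rng: "\<And>u u'. 0 < p u u' \<Longrightarrow> d u u' \<le> k" and g: "admissible p g"
    and far: "\<forall>u\<in>set g. k < d u v" and q: "adj v q" and start: "hd g \<in> branch v q"
  shows "last g \<in> branch v q"
proof -
  have "g ! t \<in> branch v q" if "t < length g" for t
    using that
  proof (induction t)
    case 0
    then show ?case
      using start by (simp add: hd_conv_nth)
  next
    case (Suc t)
    have "0 < p (g ! t) (g ! Suc t)"
      using g Suc.prems unfolding admissible_def by simp
    moreover have "k < d (g ! t) v"
      using far Suc.prems by simp
    ultimately show ?case
      using branch_short_jump[of "g ! t" "g ! Suc t" k v q] rng q Suc by simp
  qed
  then show ?thesis
    using admissible_not_Nil[OF g] by (simp add: last_conv_nth)
qed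

end

section \<open>Distances along the geodesic [x,y]\<close>

locale tree_geodesic = tree_graph +
  fixes xs :: "'a list" and x y :: 'a
  assumes geodesic: "is_geodesic adj xs x y"
begin

abbreviation m :: nat where
  "m \<equiv> length xs - 1"

lemma xs_not_Nil: "xs \<noteq> []"
  using geodesic walk_not_Nil by (auto simp: is_geodesic_def)

lemma less_length_iff_le_m: "i < length xs \<longleftrightarrow> i \<le> m"
  using xs_not_Nil by (cases xs) auto

lemma xs_0: "xs ! 0 = x" and xs_m: "xs ! m = y"
proof -
  have "hd xs = x" "last xs = y"
    using geodesic by (simp_all add: is_geodesic_def)
  then show "xs ! 0 = x" "xs ! m = y"
    using xs_not_Nil by (simp_all add: hd_conv_nth last_conv_nth)
qed

lemma xs_adj: "i < m \<Longrightarrow> adj (xs ! i) (xs ! (i + 1))"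
  using geodesic by (simp add: is_geodesic_def walk_def)

lemma xs_inj:
  assumes "i \<le> m" "j \<le> m" "xs ! i = xs ! j"
  shows "i = j"
proof -
  have "i < length xs" "j < length xs"
    using assms(1,2) less_length_iff_le_m by simp_all
  then show ?thesis
    using geodesic_nth_gdist[OF geodesic] assms(3) by metis
qed

lemma geodesic_step_up_propagates:
  assumes "i + 2 \<le> m" "d c (xs ! (i + 1)) = d c (xs ! i) + 1"
  shows "d c (xs ! (i + 2)) = d c (xs ! (i + 1)) + 1"
proof (rule ccontr)
  assume "\<not> ?thesis"
  moreover have "i + 1 < m"
    using assms(1) by simp
  ultimately have "c \<in> branch (xs ! (i + 1)) (xs ! (i + 2))"
    using adj_gdist_cases[OF xs_adj, of "i + 1" c] by (simp add: branch_def)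
  moreover have "c \<in> branch (xs ! (i + 1)) (xs ! i)"
    using assms(2) by (simp add: branch_def)
  moreover have "adj (xs ! (i + 1)) (xs ! i)" "adj (xs ! (i + 1)) (xs ! (i + 2))"
    using adj_sym xs_adj[of i] xs_adj[of "i + 1"] assms(1) by simp_all
  ultimately have "xs ! i = xs ! (i + 2)"
    using branch_unique by blast
  then show False
    using xs_inj[of i "i + 2"] assms(1) by simp
qed

lemma geodesic_increasing_after_step_up:
  assumes up: "d c (xs ! (j + 1)) = d c (xs ! j) + 1" and "j < l" "l \<le> m"
  shows "d c (xs ! l) = d c (xs ! j) + (l - j)"
proof -
  have step: "d c (xs ! (s + 1)) = d c (xs ! s) + 1" if "j \<le> s" "s < m" for s
    using that
  proof (induction s rule: dec_induct)
    case (step s)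
    then show ?case
      using geodesic_step_up_propagates[of s c] by simp
  qed (use up in simp)
  from \<open>j < l\<close> \<open>l \<le> m\<close> show ?thesis
  proof (induction l rule: less_induct)
    case (less l)
    show ?case
    proof (cases "l = j + 1")
      case False
      obtain l' where l: "l = Suc l'"
        using less.prems by (cases l) auto
      then have "d c (xs ! l') = d c (xs ! j) + (l' - j)"
        using less False by simp
      moreover have "d c (xs ! Suc l') = d c (xs ! l') + 1"
        using step[of l'] less.prems False l by simp
      ultimately show ?thesis
        using less.prems False l by simp
    qed (use up in simp)
  qed
qed

lemma geodesic_step_up_exists:
  assumes "i < j" "j \<le> m" "d c (xs ! i) < d c (xs ! j)"
  shows "\<exists>s. i \<le> s \<and> s < j \<and> d c (xs ! (s + 1)) = d c (xs ! s) + 1"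
proof (rule ccontr)
  assume none: "\<not> ?thesis"
  have "d c (xs ! t) \<le> d c (xs ! i)" if "i \<le> t" "t \<le> j" for t
    using that
  proof (induction t rule: dec_induct)
    case (step t)
    then have "t < m" "d c (xs ! (t + 1)) \<noteq> d c (xs ! t) + 1"
      using none assms(2) by auto
    then show ?case
      using adj_gdist_cases[OF xs_adj, of t c] step by simp
  qed simp
  then show False
    using assms by (meson leD less_imp_le_nat order_refl)
qed

lemma geodesic_gdist_increasing:
  assumes "i < j" "j \<le> l" "l \<le> m" "d c (xs ! i) < d c (xs ! j)"
  shows "d c (xs ! l) = d c (xs ! j) + (l - j)"
proof -
  obtain s where s: "i \<le> s" "s < j" "d c (xs ! (s + 1)) = d c (xs ! s) + 1"
    using geodesic_step_up_exists[of i j c] assms by auto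
  then show ?thesis
    using geodesic_increasing_after_step_up[OF s(3), of j] geodesic_increasing_after_step_up[OF s(3), of l]
      assms by simp
qed

lemma geodesic_gdist_after_ball_exit:
  assumes "d u (xs ! i) \<le> k" "d u (xs ! j) = k + 1" "i < j" "j \<le> l" "l \<le> m"
  shows "d u (xs ! l) = k + 1 + (l - j)"
  using geodesic_gdist_increasing[of i j l u] assms by simp

lemma geodesic_ball_exit_unique:
  assumes "d u (xs ! i) \<le> k" "d u (xs ! j) = k + 1" "d u (xs ! j') = k + 1"
    and "i < j" "i < j'" "j \<le> m" "j' \<le> m"
  shows "j = j'"
  using geodesic_gdist_after_ball_exit[of u i k j j'] geodesic_gdist_after_ball_exit[of u i k j' j] assms
  by (cases j j' rule: linorder_cases) auto

lemma branch_toward_end: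
  assumes "i < m" "d b (xs ! m) < d b (xs ! i)"
  shows "b \<in> branch (xs ! i) (xs ! (i + 1))"
proof -
  have "d b (xs ! (i + 1)) \<noteq> d b (xs ! i) + 1"
  proof
    assume "d b (xs ! (i + 1)) = d b (xs ! i) + 1"
    then have "d b (xs ! m) = d b (xs ! (i + 1)) + (m - (i + 1))"
      using geodesic_gdist_increasing[of i "i + 1" m b] assms(1) by simp
    then show False
      using assms \<open>d b (xs ! (i + 1)) = d b (xs ! i) + 1\<close> by simp
  qed
  then show ?thesis
    using adj_gdist_cases[OF xs_adj[OF assms(1)], of b] by (simp add: branch_def)
qed

lemma admissible_enters_ball:
  assumes rng: "\<And>u u'. 0 < p u u' \<Longrightarrow> d u u' \<le> k"
    and i: "0 < i" "i \<le> m" and g: "admissible p g" and end_in: "d (last g) (xs ! m) \<le> k"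
    and start: "hd g \<in> branch (xs ! i) (xs ! (i - 1))"
  shows "\<exists>u\<in>set g. d u (xs ! i) \<le> k"
proof (rule ccontr)
  assume "\<not> ?thesis"
  then have far: "\<forall>u\<in>set g. k < d u (xs ! i)"
    by auto
  have adj_prev: "adj (xs ! i) (xs ! (i - 1))"
    using xs_adj[of "i - 1"] i adj_sym by simp
  have "last g \<in> branch (xs ! i) (xs ! (i - 1))"
    by (rule admissible_stays_in_branch[OF rng g far adj_prev start])
  moreover have "k < d (last g) (xs ! i)"
    using far admissible_not_Nil[OF g] by simp
  then have "i < m"
    using end_in i by (metis le_less not_le)
  then have "last g \<in> branch (xs ! i) (xs ! (i + 1))"
    using branch_toward_end end_in \<open>k < d (last g) (xs ! i)\<close> by simp
  ultimately have "xs ! (i - 1) = xs ! (i + 1)"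
    using branch_unique adj_prev xs_adj[OF \<open>i < m\<close>] by blast
  then have "i - 1 = i + 1"
    by (rule xs_inj[rotated 2]) (use \<open>i < m\<close> in auto)
  then show False
    by simp
qed

end

section \<open>Crossing decompositions\<close>

lemma increasing_index_bound:
  "\<forall>s < l. (f :: nat \<Rightarrow> nat) s < f (s + 1) \<Longrightarrow> f 0 + l \<le> f l"
  by (induction l) (auto simp: less_Suc_eq Suc_le_eq)

context tree_geodesic
begin

lemma geodesic_first_ball_exit:
  assumes "i \<le> m" "d c (xs ! i) \<le> k" "k < d c (xs ! m)"
  obtains j where "i < j" "j \<le> m" "d c (xs ! j) = k + 1" "c \<in> branch (xs ! j) (xs ! (j - 1))"
proof -
  let ?P = "\<lambda>j. i < j \<and> j \<le> m \<and> k < d c (xs ! j)"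
  define j where "j = (LEAST j. ?P j)"
  have "?P m"
    using assms by (cases "i = m") auto
  then have j: "?P j"
    unfolding j_def by (rule LeastI)
  have "\<not> ?P (j - 1)"
  proof
    assume "?P (j - 1)"
    then have "j \<le> j - 1"
      unfolding j_def by (rule Least_le)
    then show False
      using j by linarith
  qed
  then have "d c (xs ! (j - 1)) \<le> k"
    using j assms(2) by (cases "j - 1 = i") auto
  moreover have "j - 1 < m" "j - 1 + 1 = j"
    using j by linarith+
  then have "adj (xs ! (j - 1)) (xs ! j)"
    using xs_adj[of "j - 1"] by simp
  ultimately have "d c (xs ! j) = d c (xs ! (j - 1)) + 1"
    using adj_gdist_cases[of "xs ! (j - 1)" "xs ! j" c] j by auto
  then show ?thesis
    using j \<open>d c (xs ! (j - 1)) \<le> k\<close> by (intro that[of j]) (auto simp: branch_def)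
qed

text \<open>As in \<^const>\<open>Xi_geod_with\<close>, but c_0 need only lie in the ball around xs ! ii 0 rather
  than around x. Dropping the first crossing then leaves a decomposition of the same kind.\<close>
definition crossing_decomp ::
    "nat \<Rightarrow> ('a \<Rightarrow> 'a \<Rightarrow> real) \<Rightarrow> 'a \<Rightarrow> (nat \<Rightarrow> nat) \<Rightarrow> 'a list \<Rightarrow> 'a list \<Rightarrow> 'a list list \<Rightarrow> 'a list \<Rightarrow> bool"
  where
  "crossing_decomp k p b ii g c gs gf \<longleftrightarrow>
     length c = length gs + 1 \<and>
     (\<forall>s < length gs. ii s < ii (s + 1)) \<and> ii (length gs) \<le> m \<and>
     (\<forall>j \<le> length gs. d (c ! j) (xs ! ii j) \<le> k) \<and>
     (\<forall>j < length gs. d (c ! j) (xs ! ii (j + 1)) = k + 1) \<and>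
     d (c ! length gs) (xs ! m) \<le> k \<and>
     (\<forall>s < length gs. gs ! s \<in> Ph_in p (c ! s) (c ! (s + 1)) (- Ball_k adj k (xs ! ii (s + 1)))) \<and>
     gf \<in> Ph p (c ! length gs) b \<and> g = cat_paths (gs @ [gf])"

lemma crossing_decomp_Nil_iff:
  "crossing_decomp k p b ii g c [] gf \<longleftrightarrow>
     c = [hd g] \<and> gf = g \<and> ii 0 \<le> m \<and> d (hd g) (xs ! ii 0) \<le> k \<and> d (hd g) (xs ! m) \<le> k \<and>
     g \<in> Ph p (hd g) b"
  by (auto simp: crossing_decomp_def Ph_def length_Suc_conv)

lemma crossing_decomp_ConsD:
  assumes "crossing_decomp k p b ii g c (w # gs) gf"
  obtains c0 c' where "c = c0 # c'" "ii 0 < ii 1" "d c0 (xs ! ii 0) \<le> k" "d c0 (xs ! ii 1) = k + 1"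
    "w \<in> Ph_in p c0 (c' ! 0) (- Ball_k adj k (xs ! ii 1))"
    "crossing_decomp k p b (\<lambda>s. ii (Suc s)) (cat_paths (gs @ [gf])) c' gs gf"
    "g = w @ tl (cat_paths (gs @ [gf]))"
proof -
  obtain c0 c' where c: "c = c0 # c'"
    using assms by (cases c) (auto simp: crossing_decomp_def)
  have "crossing_decomp k p b (\<lambda>s. ii (Suc s)) (cat_paths (gs @ [gf])) c' gs gf"
    using assms unfolding crossing_decomp_def c by (auto simp del: nth_Cons_Suc simp: nth_Cons_Suc[symmetric])
  moreover have "g = w @ tl (cat_paths (gs @ [gf]))"
    using assms by (cases "gs @ [gf]") (auto simp: crossing_decomp_def)
  ultimately show ?thesis
    using that assms c by (fastforce simp: crossing_decomp_def)
qed

lemma crossing_decomp_start: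
  "crossing_decomp k p b ii g c gs gf \<Longrightarrow> ii 0 \<le> m \<and> d (c ! 0) (xs ! ii 0) \<le> k"
  using increasing_index_bound[of "length gs" ii] by (auto simp: crossing_decomp_def)

lemma crossing_decomp_hd:
  assumes "crossing_decomp k p b ii g c gs gf"
  shows "g \<noteq> [] \<and> hd g = c ! 0"
proof (cases gs)
  case Nil
  then show ?thesis
    using assms by (auto simp: crossing_decomp_Nil_iff Ph_def admissible_def)
next
  case (Cons w gs')
  with assms obtain c0 c' where "c = c0 # c'" "w \<in> Ph_in p c0 (c' ! 0) (- Ball_k adj k (xs ! ii 1))"
    "g = w @ tl (cat_paths (gs' @ [gf]))"
    by (auto elim: crossing_decomp_ConsD)
  then show ?thesis
    by (auto simp: Ph_in_def Ph_def admissible_def)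
qed

lemma crossing_decomp_ConsI:
  assumes Q: "crossing_decomp k p b ii g c gs gf" and "i < ii 0"
    and "d c0 (xs ! i) \<le> k" "d c0 (xs ! ii 0) = k + 1"
    and "w \<in> Ph_in p c0 (c ! 0) (- Ball_k adj k (xs ! ii 0))"
  shows "crossing_decomp k p b (case_nat i ii) (w @ tl g) (c0 # c) (w # gs) gf"
proof -
  let ?l = "length gs"
  have q: "length c = ?l + 1" "\<forall>s < ?l. ii s < ii (s + 1)" "ii ?l \<le> m"
    "\<forall>j \<le> ?l. d (c ! j) (xs ! ii j) \<le> k" "\<forall>j < ?l. d (c ! j) (xs ! ii (j + 1)) = k + 1"
    "d (c ! ?l) (xs ! m) \<le> k"
    "\<forall>s < ?l. gs ! s \<in> Ph_in p (c ! s) (c ! (s + 1)) (- Ball_k adj k (xs ! ii (s + 1)))"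
    "gf \<in> Ph p (c ! ?l) b" "g = cat_paths (gs @ [gf])"
    using Q unfolding crossing_decomp_def by blast+
  show ?thesis
    unfolding crossing_decomp_def
  proof (intro conjI allI impI)
    fix s assume "s < length (w # gs)"
    then show "case_nat i ii s < case_nat i ii (s + 1)"
      "(w # gs) ! s \<in> Ph_in p ((c0 # c) ! s) ((c0 # c) ! (s + 1))
         (- Ball_k adj k (xs ! case_nat i ii (s + 1)))"
      "d ((c0 # c) ! s) (xs ! case_nat i ii (s + 1)) = k + 1"
      using q assms(2-5) by (cases s; simp)+
  next
    fix j assume "j \<le> length (w # gs)"
    then show "d ((c0 # c) ! j) (xs ! case_nat i ii j) \<le> k"
      using q assms(3) by (cases j) auto
  next
    show "w @ tl g = cat_paths ((w # gs) @ [gf])"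
      using q(9) by (simp add: cat_paths_Cons)
  qed (use q in simp_all)
qed

lemma crossing_decomp_Cons_start_outside:
  assumes "crossing_decomp k p b ii g c (w # gs) gf"
  shows "k < d (hd g) (xs ! m)"
proof -
  obtain c0 c' where c: "c = c0 # c'" "ii 0 < ii 1" "d c0 (xs ! ii 0) \<le> k" "d c0 (xs ! ii 1) = k + 1"
    and tail: "crossing_decomp k p b (\<lambda>s. ii (Suc s)) (cat_paths (gs @ [gf])) c' gs gf"
    using crossing_decomp_ConsD[OF assms] by metis
  have "ii 1 \<le> m"
    using crossing_decomp_start[OF tail] by simp
  then have "d c0 (xs ! m) = k + 1 + (m - ii 1)"
    using geodesic_gdist_after_ball_exit[of c0 "ii 0" k "ii 1" m] c by simp
  moreover have "hd g = c0"
    using crossing_decomp_hd[OF assms] c(1) by simp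
  ultimately show ?thesis
    by simp
qed

lemma crossing_decomp_exists:
  assumes rng: "\<And>u u'. 0 < p u u' \<Longrightarrow> d u u' \<le> k" and end_in: "d b (xs ! m) \<le> k"
  shows "admissible p g \<Longrightarrow> last g = b \<Longrightarrow> i \<le> m \<Longrightarrow> d (hd g) (xs ! i) \<le> k \<Longrightarrow>
    \<exists>ii c gs gf. ii 0 = i \<and> crossing_decomp k p b ii g c gs gf"
proof (induction "length g" arbitrary: g i rule: less_induct)
  case less
  show ?case
  proof (cases "d (hd g) (xs ! m) \<le> k")
    case True
    then have "crossing_decomp k p b (\<lambda>_. i) g [hd g] [] g"
      using less.prems by (simp add: crossing_decomp_Nil_iff Ph_def)
    then show ?thesis
      by force
  next
    case False
    then obtain j where j: "i < j" "j \<le> m" "d (hd g) (xs ! j) = k + 1"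
      "hd g \<in> branch (xs ! j) (xs ! (j - 1))"
      using geodesic_first_ball_exit[of i "hd g" k] less.prems by auto
    obtain u where "u \<in> set g" "d u (xs ! j) \<le> k"
      using admissible_enters_ball[OF rng _ j(2) less.prems(1)] j(1,4) less.prems(2) end_in by auto
    then obtain t where t: "0 < t" "t < length g" "d (g ! t) (xs ! j) \<le> k"
      "take (Suc t) g \<in> Ph_in p (hd g) (g ! t) (- Ball_k adj k (xs ! j))"
      using admissible_first_entrance[of p g "Ball_k adj k (xs ! j)" u] less.prems(1) j(3)
      by (auto simp: mem_Ball_k)
    let ?g' = "drop t g"
    have g': "length ?g' < length g" "admissible p ?g'" "last ?g' = b" "hd ?g' = g ! t"
      using t less.prems(1,2) admissible_drop by (auto simp: hd_drop_conv_nth)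
    then obtain ii c gs gf where ii: "ii 0 = j" and Q: "crossing_decomp k p b ii ?g' c gs gf"
      using less.hyps[of ?g' j] j(2) t(3) by auto
    have "c ! 0 = g ! t"
      using crossing_decomp_hd[OF Q] g'(4) by simp
    then have "crossing_decomp k p b (case_nat i ii) (take (Suc t) g @ tl ?g') (hd g # c)
        (take (Suc t) g # gs) gf"
      using crossing_decomp_ConsI[OF Q] j ii t(4) less.prems(4) by simp
    moreover have "take (Suc t) g @ tl ?g' = g"
      by (metis append_take_drop_id drop_Suc tl_drop)
    ultimately show ?thesis
      by (intro exI[of _ "case_nat i ii"]) auto
  qed
qed

lemma crossing_decomp_first_crossing_unique:
  assumes Q: "crossing_decomp k p b ii g c (w # gs) gf"
    and Q': "crossing_decomp k p b jj g c' (w' # gs') gf'" and "ii 0 = jj 0"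
  shows "w = w' \<and> ii 1 = jj 1 \<and> hd c = hd c' \<and> cat_paths (gs @ [gf]) = cat_paths (gs' @ [gf'])"
proof -
  let ?r = "cat_paths (gs @ [gf])" and ?r' = "cat_paths (gs' @ [gf'])"
  obtain c0 cr where c: "c = c0 # cr" "ii 0 < ii 1" "d c0 (xs ! ii 0) \<le> k" "d c0 (xs ! ii 1) = k + 1"
    "w \<in> Ph_in p c0 (cr ! 0) (- Ball_k adj k (xs ! ii 1))"
    and tail: "crossing_decomp k p b (\<lambda>s. ii (Suc s)) ?r cr gs gf" and g: "g = w @ tl ?r"
    using crossing_decomp_ConsD[OF Q] by metis
  obtain c0' cr' where c': "c' = c0' # cr'" "jj 0 < jj 1" "d c0' (xs ! jj 1) = k + 1"
    "w' \<in> Ph_in p c0' (cr' ! 0) (- Ball_k adj k (xs ! jj 1))"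
    and tail': "crossing_decomp k p b (\<lambda>s. jj (Suc s)) ?r' cr' gs' gf'" and g': "g = w' @ tl ?r'"
    using crossing_decomp_ConsD[OF Q'] by metis
  have "c0 = c0'"
    using crossing_decomp_hd[OF Q] crossing_decomp_hd[OF Q'] c(1) c'(1) by simp
  have start: "ii 1 \<le> m" "d (cr ! 0) (xs ! ii 1) \<le> k" "jj 1 \<le> m" "d (cr' ! 0) (xs ! jj 1) \<le> k"
    using crossing_decomp_start[OF tail] crossing_decomp_start[OF tail'] by simp_all
  then have "ii 1 = jj 1"
    using geodesic_ball_exit_unique[of c0 "ii 0" k "ii 1" "jj 1"] c c' \<open>c0 = c0'\<close> \<open>ii 0 = jj 0\<close>
    by simp
  moreover have "w' \<in> Ph_in p c0 (cr' ! 0) (- Ball_k adj k (xs ! ii 1))"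
    using c'(4) \<open>c0 = c0'\<close> \<open>ii 1 = jj 1\<close> by simp
  moreover have "w @ tl ?r = w' @ tl ?r'"
    using g g' by simp
  ultimately have "w = w'"
    using Ph_in_first_entrance_unique[OF c(5)] c(4) start by (simp add: mem_Ball_k)
  moreover have "hd ?r = hd ?r'" "?r \<noteq> []" "?r' \<noteq> []"
    using crossing_decomp_hd[OF tail] crossing_decomp_hd[OF tail'] c(5) c'(4) \<open>w = w'\<close>
    by (auto simp: Ph_in_def Ph_def)
  then have "?r = ?r'"
    using g g' \<open>w = w'\<close> by (metis list.collapse same_append_eq)
  ultimately show ?thesis
    using \<open>ii 1 = jj 1\<close> \<open>c0 = c0'\<close> c(1) c'(1) by simp
qed

lemma crossing_decomp_unique:
  "crossing_decomp k p b ii g c gs gf \<Longrightarrow> crossing_decomp k p b jj g c' gs' gf' \<Longrightarrow> ii 0 = jj 0 \<Longrightarrow>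
    c = c' \<and> gs = gs' \<and> gf = gf'"
proof (induction gs arbitrary: ii jj g c c' gs' gf')
  case Nil
  then show ?case
    using crossing_decomp_Cons_start_outside[of k p b jj g c']
    by (cases gs') (auto simp: crossing_decomp_Nil_iff)
next
  case (Cons w gs)
  show ?case
  proof (cases gs')
    case Nil
    then show ?thesis
      using crossing_decomp_Cons_start_outside[OF Cons.prems(1)] Cons.prems(2)
      by (simp add: crossing_decomp_Nil_iff)
  next
    case (Cons w' gs'')
    obtain c0 cr where "c = c0 # cr"
      and tail: "crossing_decomp k p b (\<lambda>s. ii (Suc s)) (cat_paths (gs @ [gf])) cr gs gf"
      using crossing_decomp_ConsD[OF Cons.prems(1)] by metis
    obtain c0' cr' where "c' = c0' # cr'"
      and tail': "crossing_decomp k p b (\<lambda>s. jj (Suc s)) (cat_paths (gs'' @ [gf'])) cr' gs'' gf'"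
      using crossing_decomp_ConsD[OF Cons.prems(2)[unfolded Cons]] by metis
    have "w = w'" "ii 1 = jj 1" "c0 = c0'" "cat_paths (gs @ [gf]) = cat_paths (gs'' @ [gf'])"
      using crossing_decomp_first_crossing_unique[OF Cons.prems(1) Cons.prems(2)[unfolded Cons]]
        Cons.prems(3) \<open>c = c0 # cr\<close> \<open>c' = c0' # cr'\<close> by simp_all
    then show ?thesis
      using Cons.IH[OF tail] tail' \<open>c = c0 # cr\<close> \<open>c' = c0' # cr'\<close> Cons by simp
  qed
qed

end

definition Xi_decomp ::
    "('a \<Rightarrow> 'a \<Rightarrow> bool) \<Rightarrow> nat \<Rightarrow> ('a \<Rightarrow> 'a \<Rightarrow> real) \<Rightarrow> 'a list \<Rightarrow> 'a \<Rightarrow> 'a list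
      \<Rightarrow> 'a list \<Rightarrow> 'a list list \<Rightarrow> 'a list \<Rightarrow> (nat \<Rightarrow> nat) \<Rightarrow> bool"
  where
  "Xi_decomp adj k p xs b g c gs gf ii \<longleftrightarrow>
     Xi_geod_with adj k p xs c ii \<and>
     length gs = length c - 1 \<and>
     (\<forall>s. 1 \<le> s \<and> s \<le> length c - 1 \<longrightarrow>
        gs ! (s - 1) \<in> Ph_in p (c ! (s - 1)) (c ! s) (- Ball_k adj k (xs ! ii s))) \<and>
     gf \<in> Ph p (c ! (length c - 1)) b \<and>
     g = cat_paths (gs @ [gf])"

context tree_geodesic
begin

text \<open>\<^const>\<open>Xi_geod_with\<close> does not constrain ii 0.\<close>
lemma crossing_decomp_if_Xi_decomp:
  assumes "Xi_decomp adj k p xs b g c gs gf ii"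
  shows "crossing_decomp k p b (ii(0 := 0)) g c gs gf \<and> gs \<noteq> []"
proof -
  let ?l = "length gs"
  have l: "length c = ?l + 1" "0 < ?l"
    using assms unfolding Xi_decomp_def Xi_geod_with_def Let_def by auto
  have P: "\<forall>s. 1 \<le> s \<and> s \<le> ?l \<longrightarrow> gs ! (s - 1) \<in> Ph_in p (c ! (s - 1)) (c ! s) (- Ball_k adj k (xs ! ii s))"
    "gf \<in> Ph p (c ! ?l) b" "g = cat_paths (gs @ [gf])"
    using assms l(1) unfolding Xi_decomp_def by simp_all
  have X: "0 < ii 1" "\<forall>s. 1 \<le> s \<and> s < ?l \<longrightarrow> ii s < ii (s + 1)" "ii ?l \<le> m"
    "c ! 0 \<in> Ball_k adj k (xs ! 0)" "c ! 0 \<in> bdry_k adj k (xs ! ii 1)"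
    "\<forall>j. 1 \<le> j \<and> j < ?l \<longrightarrow> c ! j \<in> Ball_k adj k (xs ! ii j) \<inter> bdry_k adj k (xs ! ii (j + 1))"
    "c ! ?l \<in> Ball_k adj k (xs ! ii ?l)" "c ! ?l \<in> Ball_k adj k (xs ! m)"
    using assms l(1) unfolding Xi_decomp_def Xi_geod_with_def Let_def by simp_all
  show ?thesis
    unfolding crossing_decomp_def
  proof (intro conjI allI impI)
    fix s assume "s < ?l"
    then show "(ii(0 := 0)) s < (ii(0 := 0)) (s + 1)"
      "d (c ! s) (xs ! (ii(0 := 0)) (s + 1)) = k + 1"
      "gs ! s \<in> Ph_in p (c ! s) (c ! (s + 1)) (- Ball_k adj k (xs ! (ii(0 := 0)) (s + 1)))"
      using X(1,2,5,6) P(1)[rule_format, of "s + 1"] by (cases s; auto simp: mem_bdry_k)+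
  next
    fix j assume "j \<le> ?l"
    then consider "j = 0" | "1 \<le> j" "j < ?l" | "j = ?l"
      by linarith
    then show "d (c ! j) (xs ! (ii(0 := 0)) j) \<le> k"
      using X(4,6,7) l(2) by cases (auto simp: mem_Ball_k)
  qed (use l X P in \<open>auto simp: mem_Ball_k\<close>)
qed

lemma Xi_decomp_if_crossing_decomp:
  assumes Q: "crossing_decomp k p b ii g c gs gf" and "ii 0 = 0" "gs \<noteq> []"
  shows "Xi_decomp adj k p xs b g c gs gf ii"
proof -
  let ?l = "length gs"
  have q: "length c = ?l + 1" "\<forall>s < ?l. ii s < ii (s + 1)" "ii ?l \<le> m"
    "\<forall>j \<le> ?l. d (c ! j) (xs ! ii j) \<le> k" "\<forall>j < ?l. d (c ! j) (xs ! ii (j + 1)) = k + 1"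
    "d (c ! ?l) (xs ! m) \<le> k"
    "\<forall>s < ?l. gs ! s \<in> Ph_in p (c ! s) (c ! (s + 1)) (- Ball_k adj k (xs ! ii (s + 1)))"
    "gf \<in> Ph p (c ! ?l) b" "g = cat_paths (gs @ [gf])"
    using Q unfolding crossing_decomp_def by blast+
  have "?l \<le> m"
    using increasing_index_bound[OF q(2)] q(3) assms(2) by simp
  have "0 < ?l"
    using assms(3) by simp
  have "0 < ii 1"
    using q(2) \<open>0 < ?l\<close> assms(2) by fastforce
  have "c ! 0 \<in> Ball_k adj k (xs ! 0) \<inter> bdry_k adj k (xs ! ii 1)"
    using q(4)[rule_format, of 0] q(5)[rule_format, of 0] \<open>0 < ?l\<close> assms(2)
    by (simp add: mem_Ball_k mem_bdry_k)
  moreover have "\<forall>j. 1 \<le> j \<and> j < ?l \<longrightarrow> c ! j \<in> Ball_k adj k (xs ! ii j) \<inter> bdry_k adj k (xs ! ii (j + 1))"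
    using q(4,5) by (simp add: mem_Ball_k mem_bdry_k)
  moreover have "c ! ?l \<in> Ball_k adj k (xs ! ii ?l) \<inter> Ball_k adj k (xs ! m)"
    using q(4,6) by (simp add: mem_Ball_k)
  moreover have "\<forall>j. 1 \<le> j \<and> j \<le> ?l \<longrightarrow> (c ! (j - 1), c ! j) \<in> Xi adj k p (xs ! ii j)"
  proof (intro allI impI)
    fix j assume j: "1 \<le> j \<and> j \<le> ?l"
    then have "j - 1 < ?l" "j - 1 + 1 = j"
      by linarith+
    then show "(c ! (j - 1), c ! j) \<in> Xi adj k p (xs ! ii j)"
      using q(4)[rule_format, of j] q(5)[rule_format, of "j - 1"] q(7)[rule_format, of "j - 1"] j
      unfolding Xi_def by (auto simp: mem_Ball_k mem_bdry_k)
  qed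
  moreover have "c \<noteq> []"
    using q(1) by auto
  ultimately have "Xi_geod_with adj k p xs c ii"
    using q(1-3) \<open>?l \<le> m\<close> \<open>0 < ?l\<close> \<open>0 < ii 1\<close>
    unfolding Xi_geod_with_def Let_def by simp
  moreover have "\<forall>s. 1 \<le> s \<and> s \<le> ?l \<longrightarrow>
      gs ! (s - 1) \<in> Ph_in p (c ! (s - 1)) (c ! s) (- Ball_k adj k (xs ! ii s))"
    using q(7) by (metis Suc_diff_1 Suc_eq_plus1 diff_less less_le_trans zero_less_one)
  ultimately show ?thesis
    using q(1,8,9) unfolding Xi_decomp_def by simp
qed

lemma Xi_decomp_unique:
  assumes "Xi_decomp adj k p xs b g c gs gf ii" "Xi_decomp adj k p xs b g c' gs' gf' ii'"
  shows "(c, gs, gf) = (c', gs', gf')"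
  using crossing_decomp_unique crossing_decomp_if_Xi_decomp[OF assms(1)]
    crossing_decomp_if_Xi_decomp[OF assms(2)] by fastforce

lemma Xi_decomp_exists:
  assumes rng: "\<And>u v. 0 < p u v \<Longrightarrow> d u v \<le> k" and g: "g \<in> Ph p a b"
    and "d a x \<le> k" "k < d a y" "d b y \<le> k"
  shows "\<exists>c gs gf ii. Xi_decomp adj k p xs b g c gs gf ii"
proof -
  have g': "admissible p g" "hd g = a" "last g = b"
    using g by (auto simp: Ph_def)
  then obtain ii c gs gf where ii: "ii 0 = 0" and Q: "crossing_decomp k p b ii g c gs gf"
    using crossing_decomp_exists[OF rng _ g'(1,3), of 0] assms(3,5) xs_0 xs_m by auto
  have "gs \<noteq> []"
    using Q assms(4) g'(2) xs_m by (cases gs) (auto simp: crossing_decomp_Nil_iff)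
  then show ?thesis
    using Xi_decomp_if_crossing_decomp[OF Q ii] by blast
qed

end

theorem proposition3p20:
  fixes adj :: "'a \<Rightarrow> 'a \<Rightarrow> bool" and p :: "'a \<Rightarrow> 'a \<Rightarrow> real" and k :: nat
    and \<gamma> :: "'a list" and a b x y :: 'a and xs :: "'a list"
  assumes tree: "is_tree adj" and bv: "bounded_valence adj"
    and kernel: "transition_kernel p" and irr: "irreducible_kernel p"
    and range: "\<And>u v. gdist adj u v > k \<Longrightarrow> p u v = 0"
    and gam: "\<gamma> \<in> Ph p a b"
    and xy: "x \<noteq> y"
    and a_in: "a \<in> Ball_k adj k x" and a_notin: "a \<notin> Ball_k adj k y"
    and b_in: "b \<in> Ball_k adj k y"
    and geod: "is_geodesic adj xs x y"
  shows "\<exists>!(c, gs, gf). \<exists>ii.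
           Xi_geod_with adj k p xs c ii \<and>
           length gs = length c - 1 \<and>
           (\<forall>s. 1 \<le> s \<and> s \<le> length c - 1 \<longrightarrow>
              gs ! (s - 1) \<in> Ph_in p (c ! (s - 1)) (c ! s) (- Ball_k adj k (xs ! ii s))) \<and>
           gf \<in> Ph p (c ! (length c - 1)) b \<and>
           \<gamma> = cat_paths (gs @ [gf])"
proof -
  interpret tree_geodesic adj xs x y
    using tree geod by unfold_locales
  have rng: "d u v \<le> k" if "0 < p u v" for u v
    using range[of u v] that by fastforce
  obtain c gs gf ii where P: "Xi_decomp adj k p xs b \<gamma> c gs gf ii"
    using Xi_decomp_exists[OF rng gam] a_in a_notin b_in by (auto simp: mem_Ball_k)
  have "\<exists>!(c, gs, gf). \<exists>ii. Xi_decomp adj k p xs b \<gamma> c gs gf ii"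
  proof (rule ex1I[of _ "(c, gs, gf)"])
    fix z
    assume "case z of (c', gs', gf') \<Rightarrow> \<exists>ii'. Xi_decomp adj k p xs b \<gamma> c' gs' gf' ii'"
    then show "z = (c, gs, gf)"
      using Xi_decomp_unique[OF _ P] by (cases z) auto
  qed (use P in auto)
  then show ?thesis
    unfolding Xi_decomp_def .
qed

end
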